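(* In the isotropic setting below, for all $F\in\mathrm{GL}^+(3)$ and $C_p\in\mathrm{PSym}(3)$ one has $$\widetilde\Sigma\,C_p\in\mathrm{Sym}(3),\quad C_p^{-1}\widetilde\Sigma\in\mathrm{Sym}(3),\quad (\mathrm{dev}_3\widetilde\Sigma)\,C_p\in\mathrm{Sym}(3),\quad C_p^{-1}\mathrm{dev}_3\widetilde\Sigma\in\mathrm{Sym}(3).$$
   Context: $W$ objective and isotropic, written $W(F_e)=\Psi(I_1(C_e),I_2(C_e),I_3(C_e))$ with $\Psi$ of class $C^1$; $I_1=\mathrm{tr}$, $I_2(X)=\mathrm{tr}(\mathrm{Cof}X)$, $I_3=\det$; $\widetilde W(X)=\Psi(I_1(X),I_2(X),I_3(X))$. $C=F^TF$. $\langle X,Y\rangle=\mathrm{tr}(XY^T)$, $D$ the gradient w.r.t. it. $\widetilde\Sigma:=2\,C\,D\widetilde W(CC_p^{-1})\,C_p^{-1}$. $\mathrm{dev}_3X=X-\frac13\mathrm{tr}(X)\mathbb{1}$. $\mathrm{Sym}(3)$, $\mathrm{PSym}(3)$: symmetric, resp. symmetric positive definite $3\times3$ matrices. *)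

theory Defs
  imports "HOL-Analysis.Analysis"
begin

type_synonym mat3 = "real^3^3"

definition frob :: "mat3 \<Rightarrow> mat3 \<Rightarrow> real" where
  "frob X Y = trace (X ** transpose Y)"

definition Dgrad :: "(mat3 \<Rightarrow> real) \<Rightarrow> mat3 \<Rightarrow> mat3" where
  "Dgrad f X = (THE G. (f has_derivative (\<lambda>H. frob G H)) (at X))"

text \<open>Cofactor matrix of a 3x3 matrix: row i is the cross product of rows i+1 and i+2
  (indices mod 3).\<close>
definition Cof :: "mat3 \<Rightarrow> mat3" where
  "Cof X = (\<chi> i. cross3 (X $ (i + 1)) (X $ (i + 2)))"

definition I1 :: "mat3 \<Rightarrow> real" where "I1 X = trace X"
definition I2 :: "mat3 \<Rightarrow> real" where "I2 X = trace (Cof X)"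
definition I3 :: "mat3 \<Rightarrow> real" where "I3 X = det X"

definition Wtilde :: "(real^3 \<Rightarrow> real) \<Rightarrow> mat3 \<Rightarrow> real" where
  "Wtilde \<Psi> X = \<Psi> (vector [I1 X, I2 X, I3 X])"

definition C1 :: "(real^3 \<Rightarrow> real) \<Rightarrow> bool" where
  "C1 \<Psi> \<longleftrightarrow> (\<exists>\<Psi>'. (\<forall>x. (\<Psi> has_derivative (\<lambda>h. \<Psi>' x \<bullet> h)) (at x)) \<and> continuous_on UNIV \<Psi>')"

definition Sym3 :: "mat3 set" where "Sym3 = {X. transpose X = X}"
definition PSym3 :: "mat3 set" where
  "PSym3 = {X. transpose X = X \<and> (\<forall>v. v \<noteq> 0 \<longrightarrow> v \<bullet> (X *v v) > 0)}"
definition GLplus3 :: "mat3 set" where "GLplus3 = {F. det F > 0}"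

definition dev3 :: "mat3 \<Rightarrow> mat3" where
  "dev3 X = X - (trace X / 3) *\<^sub>R mat 1"

definition SigmaT :: "(real^3 \<Rightarrow> real) \<Rightarrow> mat3 \<Rightarrow> mat3 \<Rightarrow> mat3" where
  "SigmaT \<Psi> F Cp = (let C = transpose F ** F in
     2 *\<^sub>R (C ** Dgrad (Wtilde \<Psi>) (C ** matrix_inv Cp) ** matrix_inv Cp))"

end

theory Submission
  imports Defs
begin

(* Put C = F^T F, P = Cp^{-1}, X = C P and G = D W~(X), so that
   Sigma~ = 2 K P with K = C G.
   (1) Isotropy.  The Frobenius gradients of the invariants are
       D I1 = 1,  D I2 = tr X 1 - X^T,  D I3 = Cof X,
       so by the chain rule G = a 1 + b (tr X 1 - X^T) + c Cof X for some reals a, b, c.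
   (2) Multiplying on the left by the symmetric C: C X^T = C P C, and the adjugate
       identity Cof(X)^T X = det X 1 gives C Cof X = det X Cp.  Hence K is symmetric.
   (3) With K, P, Cp symmetric and P Cp = 1: Sigma~ Cp = 2 K and P Sigma~ = 2 P K P are
       symmetric.
   (4) dev3 subtracts a multiple of the identity, which preserves both properties. *)

lemma cyclic_indices_3:
  "(1::3) + 1 = 2" "(1::3) + 2 = 3" "(2::3) + 1 = 3" "(2::3) + 2 = 1" "(3::3) + 1 = 1" "(3::3) + 2 = 2"
  by simp_all

lemma Cof_entries:
  "Cof X $ 1 $ 1 = X$2$2*X$3$3 - X$2$3*X$3$2"
  "Cof X $ 1 $ 2 = X$2$3*X$3$1 - X$2$1*X$3$3"
  "Cof X $ 1 $ 3 = X$2$1*X$3$2 - X$2$2*X$3$1"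
  "Cof X $ 2 $ 1 = X$3$2*X$1$3 - X$3$3*X$1$2"
  "Cof X $ 2 $ 2 = X$3$3*X$1$1 - X$3$1*X$1$3"
  "Cof X $ 2 $ 3 = X$3$1*X$1$2 - X$3$2*X$1$1"
  "Cof X $ 3 $ 1 = X$1$2*X$2$3 - X$1$3*X$2$2"
  "Cof X $ 3 $ 2 = X$1$3*X$2$1 - X$1$1*X$2$3"
  "Cof X $ 3 $ 3 = X$1$1*X$2$2 - X$1$2*X$2$1"
  unfolding Cof_def vec_lambda_beta cyclic_indices_3 by (simp_all add: cross3_simps)

lemma Cof_adjugate: "transpose (Cof X) ** X = det X *\<^sub>R mat 1"
  unfolding vec_eq_iff forall_3
  by (simp add: matrix_matrix_mult_def transpose_def sum_3 Cof_entries det_3 mat_def; algebra)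

lemma frob_entries: "frob G H = (\<Sum>i\<in>UNIV. \<Sum>j\<in>UNIV. G$i$j * H$i$j)"
  by (simp add: frob_def trace_def matrix_matrix_mult_def transpose_def)

lemma frob_3: "frob G H = G$1$1*H$1$1 + G$1$2*H$1$2 + G$1$3*H$1$3
  + G$2$1*H$2$1 + G$2$2*H$2$2 + G$2$3*H$2$3 + G$3$1*H$3$1 + G$3$2*H$3$2 + G$3$3*H$3$3"
  by (simp add: frob_entries sum_3)

text \<open>Testing against the matrix units recovers every entry, so the Frobenius
  pairing is nondegenerate.\<close>
lemma frob_unit: "frob G (\<chi> a b. if a = i \<and> b = j then 1 else 0) = G$i$j"
proof -
  have delta: "G$a$b * (if a = i \<and> b = j then 1 else 0)
             = (if a = i then if b = j then G$a$b else 0 else 0)" for a b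
    by simp
  show ?thesis
    unfolding frob_entries vec_lambda_beta delta by (simp add: sum.If_cases)
qed

lemma frob_injective: "frob G = frob G' \<Longrightarrow> G = G'"
  by (metis frob_unit vec_eq_iff)

lemma Dgrad_eqI: "(f has_derivative frob G) (at X) \<Longrightarrow> Dgrad f X = G"
  unfolding Dgrad_def
  by (rule the_equality, assumption, metis has_derivative_unique frob_injective)

lemma has_derivative_entry [derivative_intros]:
  "((\<lambda>X::'a::real_normed_vector^'n^'m. X$i$j) has_derivative (\<lambda>H. H$i$j)) F"
  by (rule bounded_linear_imp_has_derivative,
      rule bounded_linear_compose[OF bounded_linear_vec_nth bounded_linear_vec_nth])

lemma trace_3: "trace (X::mat3) = X$1$1 + X$2$2 + X$3$3"
  by (simp add: trace_def sum_3)

lemma gradient_I1: "(I1 has_derivative frob (mat 1)) (at X)"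
proof -
  have expl: "I1 = (\<lambda>X. X$1$1 + X$2$2 + X$3$3)"
    by (simp add: I1_def trace_3 fun_eq_iff)
  show ?thesis unfolding expl
    by (rule has_derivative_eq_rhs, (rule derivative_intros)+,
        simp add: frob_3 mat_def fun_eq_iff)
qed

lemma gradient_I2: "(I2 has_derivative frob (trace X *\<^sub>R mat 1 - transpose X)) (at X)"
proof -
  have expl: "I2 = (\<lambda>A. A$2$2*A$3$3 - A$2$3*A$3$2 + (A$3$3*A$1$1 - A$3$1*A$1$3)
                 + (A$1$1*A$2$2 - A$1$2*A$2$1))"
    by (simp add: I2_def trace_3 Cof_entries fun_eq_iff)
  show ?thesis unfolding expl
    by (rule has_derivative_eq_rhs, (rule derivative_intros)+,
        simp add: frob_3 trace_3 mat_def transpose_def fun_eq_iff algebra_simps)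
qed

lemma gradient_I3: "(I3 has_derivative frob (Cof X)) (at X)"
proof -
  have expl: "I3 = (\<lambda>A. A$1$1 * A$2$2 * A$3$3 + A$1$2 * A$2$3 * A$3$1 + A$1$3 * A$2$1 * A$3$2
                 - A$1$1 * A$2$3 * A$3$2 - A$1$2 * A$2$1 * A$3$3 - A$1$3 * A$2$2 * A$3$1)"
    by (simp add: I3_def det_3 fun_eq_iff)
  show ?thesis unfolding expl
    by (rule has_derivative_eq_rhs, (rule derivative_intros)+,
        simp add: frob_3 Cof_entries fun_eq_iff algebra_simps)
qed

lemma gradient_Wtilde:
  assumes "(\<Psi> has_derivative (\<lambda>h. g \<bullet> h)) (at (vector [I1 X, I2 X, I3 X]))"
  shows "Dgrad (Wtilde \<Psi>) X
       = g$1 *\<^sub>R mat 1 + g$2 *\<^sub>R (trace X *\<^sub>R mat 1 - transpose X) + g$3 *\<^sub>R Cof X"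
proof (rule Dgrad_eqI)
  define invariants :: "mat3 \<Rightarrow> real^3"
    where "invariants Y = I1 Y *\<^sub>R axis 1 1 + I2 Y *\<^sub>R axis 2 1 + I3 Y *\<^sub>R axis 3 1" for Y
  have invariants_vector: "invariants Y = vector [I1 Y, I2 Y, I3 Y]" for Y
    by (simp add: invariants_def vec_eq_iff forall_3 vector_3 axis_def)
  have invariants_derivative: "(invariants has_derivative (\<lambda>H. frob (mat 1) H *\<^sub>R axis 1 1
      + frob (trace X *\<^sub>R mat 1 - transpose X) H *\<^sub>R axis 2 1 + frob (Cof X) H *\<^sub>R axis 3 1)) (at X)"
    unfolding invariants_def
    by (intro has_derivative_add has_derivative_scaleR_left gradient_I1 gradient_I2 gradient_I3)
  have chain: "Wtilde \<Psi> = \<Psi> \<circ> invariants"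
    by (simp add: Wtilde_def invariants_vector fun_eq_iff)
  show "(Wtilde \<Psi> has_derivative
      frob (g$1 *\<^sub>R mat 1 + g$2 *\<^sub>R (trace X *\<^sub>R mat 1 - transpose X) + g$3 *\<^sub>R Cof X)) (at X)"
    unfolding chain
    by (rule has_derivative_eq_rhs[OF diff_chain_at[OF invariants_derivative assms[folded invariants_vector]]])
       (simp add: fun_eq_iff frob_3 inner_add_right inner_axis algebra_simps)
qed

lemma transpose_add: "transpose (A + B) = transpose A + transpose (B :: 'a::ab_group_add^'n^'m)"
  by (simp add: transpose_def vec_eq_iff)

lemma transpose_diff: "transpose (A - B) = transpose A - transpose (B :: 'a::ab_group_add^'n^'m)"
  by (simp add: transpose_def vec_eq_iff)

lemma matrix_diff_rdistrib: "(A - B) ** C = A ** C - B ** (C :: 'a::ring_1^'p^'n)"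
  by (simp add: matrix_matrix_mult_def vec_eq_iff sum_subtractf algebra_simps)

lemma matrix_diff_ldistrib: "A ** (B - C) = A ** B - A ** (C :: 'a::ring_1^'p^'n)"
  by (simp add: matrix_matrix_mult_def vec_eq_iff sum_subtractf algebra_simps)

lemma positive_definite_invertible:
  fixes A :: "real^'n^'n"
  assumes "\<forall>v. v \<noteq> 0 \<longrightarrow> v \<bullet> (A *v v) > 0"
  shows "invertible A"
proof -
  have "\<forall>x. A *v x = 0 \<longrightarrow> x = 0"
    using assms by (metis inner_zero_right less_irrefl)
  then have "\<exists>B. B ** A = mat 1"
    by (simp only: matrix_left_invertible_ker)
  then show ?thesis
    by (simp only: invertible_left_inverse)
qed

lemma matrix_inv_inverse:
  fixes A :: "'a::semiring_1^'n^'n"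
  assumes "invertible A"
  shows "A ** matrix_inv A = mat 1" and "matrix_inv A ** A = mat 1"
proof -
  have "A ** matrix_inv A = mat 1 \<and> matrix_inv A ** A = mat 1"
    unfolding matrix_inv_def using assms unfolding invertible_def by (rule someI_ex)
  then show "A ** matrix_inv A = mat 1" and "matrix_inv A ** A = mat 1" by blast+
qed

lemma matrix_inv_symmetric:
  fixes A :: "'a::comm_semiring_1^'n^'n"
  assumes "transpose A = A" and "invertible A"
  shows "transpose (matrix_inv A) = matrix_inv A"
proof -
  let ?B = "matrix_inv A"
  have left: "transpose ?B ** A = mat 1"
    using matrix_inv_inverse(1)[OF assms(2)] assms(1) by (metis matrix_transpose_mul transpose_mat)
  have "transpose ?B = transpose ?B ** (A ** ?B)"
    using matrix_inv_inverse(1)[OF assms(2)] by simp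
  also have "\<dots> = ?B"
    by (simp add: matrix_mul_assoc left)
  finally show ?thesis .
qed

text \<open>With X = C P and P the inverse of Cp, the adjugate identity turns C Cof X into
  a multiple of Cp.\<close>
lemma times_Cof:
  fixes C Cp P :: mat3
  assumes "transpose C = C" and "transpose Cp = Cp" and "P ** Cp = mat 1"
  shows "C ** Cof (C ** P) = det (C ** P) *\<^sub>R Cp"
proof -
  let ?X = "C ** P"
  have "(transpose (Cof ?X) ** C) ** (P ** Cp) = det ?X *\<^sub>R Cp"
    using arg_cong[OF Cof_adjugate[of ?X], of "\<lambda>M. M ** Cp"]
    by (simp add: matrix_mul_assoc scalar_matrix_assoc[symmetric])
  then have "transpose (Cof ?X) ** C = det ?X *\<^sub>R Cp"
    using assms(3) by simp
  then have "transpose (transpose (Cof ?X) ** C) = transpose (det ?X *\<^sub>R Cp)"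
    by simp
  then show ?thesis
    by (simp add: matrix_transpose_mul transpose_scalar assms(1,2))
qed

lemma times_isotropic_symmetric:
  fixes C Cp P :: mat3
  assumes "transpose C = C" and "transpose Cp = Cp" and "transpose P = P"
    and "P ** Cp = mat 1"
  defines "X \<equiv> C ** P"
  shows "C ** (a *\<^sub>R mat 1 + b *\<^sub>R (trace X *\<^sub>R mat 1 - transpose X) + c *\<^sub>R Cof X)
      \<in> Sym3"
proof -
  have "C ** transpose X = C ** P ** C"
    by (simp add: X_def matrix_transpose_mul assms(1,3) matrix_mul_assoc)
  then have "C ** (a *\<^sub>R mat 1 + b *\<^sub>R (trace X *\<^sub>R mat 1 - transpose X) + c *\<^sub>R Cof X)
      = a *\<^sub>R C + b *\<^sub>R (trace X *\<^sub>R C - C ** P ** C) + c *\<^sub>R (det X *\<^sub>R Cp)"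
    using times_Cof[OF assms(1,2,4)]
    by (simp add: X_def matrix_add_ldistrib matrix_diff_ldistrib matrix_scalar_ac
        scalar_matrix_assoc[symmetric] scaleR_diff_right)
  then show ?thesis
    by (simp add: Sym3_def transpose_add transpose_diff transpose_scalar matrix_transpose_mul
        assms(1-3) matrix_mul_assoc)
qed

lemma stress_right_symmetric:
  fixes K P Cp :: mat3
  assumes "K \<in> Sym3" and "P ** Cp = mat 1"
  shows "(r *\<^sub>R (K ** P)) ** Cp \<in> Sym3"
  using assms by (simp add: Sym3_def matrix_mul_assoc[symmetric] transpose_scalar
      scalar_matrix_assoc[symmetric])

lemma stress_left_symmetric:
  fixes K P :: mat3
  assumes "K \<in> Sym3" and "transpose P = P"
  shows "P ** (r *\<^sub>R (K ** P)) \<in> Sym3"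
  using assms by (simp add: Sym3_def matrix_scalar_ac scalar_matrix_assoc[symmetric]
      transpose_scalar matrix_transpose_mul matrix_mul_assoc)

lemma dev3_right_symmetric:
  assumes "S ** Cp \<in> Sym3" and "transpose Cp = Cp"
  shows "dev3 S ** Cp \<in> Sym3"
  using assms by (simp add: Sym3_def dev3_def matrix_diff_rdistrib transpose_diff transpose_scalar
      scalar_matrix_assoc[symmetric])

lemma dev3_left_symmetric:
  assumes "P ** S \<in> Sym3" and "transpose P = P"
  shows "P ** dev3 S \<in> Sym3"
  using assms by (simp add: Sym3_def dev3_def matrix_diff_ldistrib transpose_diff transpose_scalar
      matrix_scalar_ac scalar_matrix_assoc[symmetric])

theorem mainTheorem7:
  fixes \<Psi> :: "real^3 \<Rightarrow> real" and F Cp :: "real^3^3"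
  assumes "C1 \<Psi>" and "F \<in> GLplus3" and "Cp \<in> PSym3"
  shows "SigmaT \<Psi> F Cp ** Cp \<in> Sym3 \<and>
         matrix_inv Cp ** SigmaT \<Psi> F Cp \<in> Sym3 \<and>
         dev3 (SigmaT \<Psi> F Cp) ** Cp \<in> Sym3 \<and>
         matrix_inv Cp ** dev3 (SigmaT \<Psi> F Cp) \<in> Sym3"
proof -
  define C where "C = transpose F ** F"
  define P where "P = matrix_inv Cp"
  define X where "X = C ** P"
  have C_sym: "transpose C = C" by (simp add: C_def matrix_transpose_mul)
  have Cp_sym: "transpose Cp = Cp" and "invertible Cp"
    using assms(3) positive_definite_invertible by (auto simp: PSym3_def)
  then have P_inv: "P ** Cp = mat 1" and P_sym: "transpose P = P"
    by (simp_all add: P_def matrix_inv_inverse matrix_inv_symmetric)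
  obtain g where "(\<Psi> has_derivative (\<lambda>h. g \<bullet> h)) (at (vector [I1 X, I2 X, I3 X]))"
    using assms(1) unfolding C1_def by blast
  then have K_sym: "C ** Dgrad (Wtilde \<Psi>) X \<in> Sym3"
    using times_isotropic_symmetric[OF C_sym Cp_sym P_sym P_inv]
    by (simp add: gradient_Wtilde X_def)
  have "SigmaT \<Psi> F Cp = 2 *\<^sub>R (C ** Dgrad (Wtilde \<Psi>) X ** P)"
    by (simp add: SigmaT_def Let_def C_def P_def X_def)
  then have "SigmaT \<Psi> F Cp ** Cp \<in> Sym3" and "P ** SigmaT \<Psi> F Cp \<in> Sym3"
    using stress_right_symmetric[OF K_sym P_inv] stress_left_symmetric[OF K_sym P_sym] by simp_all
  then show ?thesis
    unfolding P_def[symmetric] using dev3_right_symmetric dev3_left_symmetric Cp_sym P_sym by blast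
qed

end
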